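(* Let $\Gamma$ be a countably infinite discrete group and let $\boldsymbol{b}=\Gamma\curvearrowright^b (Y,\nu)$ be a non-trivial totally ergodic measure preserving action of $\Gamma$. (i) If $C\subseteq\Gamma$ is a subset such that $\nu(\{y\in Y : C\subseteq \Gamma_y\})>0$, then the subgroup $\langle C\rangle$ generated by $C$ is finite. (ii) For $\nu$-almost every $y\in Y$, the stabilizer $\Gamma_y$ is locally finite.
   Context: A measure preserving action $\Gamma\curvearrowright^b (Y,\nu)$ consists of a standard Borel space $Y$, a Borel probability measure $\nu$, and a Borel $\nu$-preserving action of $\Gamma$ on $Y$. It is non-trivial if $\nu$ is not a point mass, and totally ergodic if its restriction to every infinite subgroup of $\Gamma$ is ergodic. The stabilizer is $\Gamma_y=\{\gamma\in\Gamma:\gamma^b y=y\}$. A group is locally finite if every finitely generated subgroup is finite. *)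

theory Defs
  imports "HOL-Probability.Probability" "HOL-Algebra.Generated_Groups"
begin

definition mp_action :: "('g, 'c) monoid_scheme \<Rightarrow> 'y measure \<Rightarrow> ('g \<Rightarrow> 'y \<Rightarrow> 'y) \<Rightarrow> bool" where
  "mp_action G M b \<longleftrightarrow>
     (\<forall>g\<in>carrier G. b g \<in> M \<rightarrow>\<^sub>M M \<and> distr M M (b g) = M) \<and>
     (\<forall>y\<in>space M. b \<one>\<^bsub>G\<^esub> y = y) \<and>
     (\<forall>g\<in>carrier G. \<forall>h\<in>carrier G. \<forall>y\<in>space M. b (g \<otimes>\<^bsub>G\<^esub> h) y = b g (b h y))"

definition point_mass :: "'y measure \<Rightarrow> bool" where
  "point_mass M \<longleftrightarrow> (\<exists>y\<in>space M. M = return M y)"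

definition ergodic_on :: "'y measure \<Rightarrow> ('g \<Rightarrow> 'y \<Rightarrow> 'y) \<Rightarrow> 'g set \<Rightarrow> bool" where
  "ergodic_on M b H \<longleftrightarrow>
     (\<forall>A\<in>sets M. (\<forall>h\<in>H. b h -` A \<inter> space M = A) \<longrightarrow> measure M A = 0 \<or> measure M A = 1)"

definition totally_ergodic :: "('g, 'c) monoid_scheme \<Rightarrow> 'y measure \<Rightarrow> ('g \<Rightarrow> 'y \<Rightarrow> 'y) \<Rightarrow> bool" where
  "totally_ergodic G M b \<longleftrightarrow> (\<forall>H. subgroup H G \<and> infinite H \<longrightarrow> ergodic_on M b H)"

definition stabilizer :: "('g, 'c) monoid_scheme \<Rightarrow> ('g \<Rightarrow> 'y \<Rightarrow> 'y) \<Rightarrow> 'y \<Rightarrow> 'g set" where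
  "stabilizer G b y = {g \<in> carrier G. b g y = y}"

definition locally_finite :: "('g, 'c) monoid_scheme \<Rightarrow> 'g set \<Rightarrow> bool" where
  "locally_finite G S \<longleftrightarrow> (\<forall>F. finite F \<and> F \<subseteq> S \<longrightarrow> finite (generate G F))"

end

theory Submission
  imports Defs
begin

text \<open>Let A be the set of points fixed by the subgroup \<open>\<langle>C\<rangle>\<close>, and suppose it has positive
  measure. A point moved into A by h \<in> \<open>\<langle>C\<rangle>\<close> was already fixed by h, because h\<inverse> fixes its image;
  hence B \<inter> A is \<open>\<langle>C\<rangle>\<close>-invariant for every measurable B. Were \<open>\<langle>C\<rangle>\<close> infinite, total ergodicity
  would make A conull and then every measurable set null or conull. On a second countable
  Hausdorff space such a probability measure is concentrated at the unique point all of whose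
  neighbourhoods have full measure, contradicting non-triviality. Part (ii) follows from (i)
  by a countable union over the finite subsets of \<open>\<Gamma>\<close>.\<close>

lemma AE_full_measure_nbhds:
  fixes M :: "'a::second_countable_topology measure"
  assumes "prob_space M" and sets_M: "sets M = sets borel"
    and zero_one: "\<forall>B\<in>sets M. measure M B = 0 \<or> measure M B = 1"
  shows "AE x in M. \<forall>U. open U \<longrightarrow> x \<in> U \<longrightarrow> measure M U = 1"
proof -
  interpret prob_space M by fact
  obtain \<B> :: "'a set set" where "countable \<B>" and basis: "topological_basis \<B>"
    using ex_countable_basis by blast
  have open_basis: "V \<in> \<B> \<Longrightarrow> open V" for V
    using basis topological_basis_open by blast
  define N where "N = {V \<in> \<B>. prob V = 0}"
  have "countable N"
    using \<open>countable \<B>\<close> by (simp add: N_def)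
  moreover have "V \<in> null_sets M" if "V \<in> N" for V
    using that open_basis sets_M by (auto simp: N_def emeasure_eq_measure)
  ultimately have "\<Union>N \<in> null_sets M"
    using null_sets_UN'[of N "\<lambda>V. V" M] by simp
  moreover have "{x \<in> space M. \<not> (\<forall>U. open U \<longrightarrow> x \<in> U \<longrightarrow> prob U = 1)} \<subseteq> \<Union>N"
  proof
    fix x assume "x \<in> {x \<in> space M. \<not> (\<forall>U. open U \<longrightarrow> x \<in> U \<longrightarrow> prob U = 1)}"
    then obtain U where U: "open U" "x \<in> U" "prob U \<noteq> 1"
      by blast
    then have "prob U = 0"
      using zero_one sets_M by auto
    obtain V where V: "V \<in> \<B>" "x \<in> V" "V \<subseteq> U"
      using basis U topological_basisE by blast
    have "prob V \<le> prob U"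
      using V U open_basis sets_M by (intro finite_measure_mono) auto
    with \<open>prob U = 0\<close> have "V \<in> N"
      using V measure_nonneg[of M V] by (simp add: N_def)
    with V show "x \<in> \<Union>N" by blast
  qed
  ultimately show ?thesis
    by (rule AE_I')
qed

lemma full_measure_nbhds_unique:
  fixes M :: "'a::t2_space measure"
  assumes "prob_space M" and sets_M: "sets M = sets borel"
    and x: "\<forall>U. open U \<longrightarrow> x \<in> U \<longrightarrow> measure M U = 1"
    and z: "\<forall>U. open U \<longrightarrow> z \<in> U \<longrightarrow> measure M U = 1"
  shows "x = z"
proof (rule ccontr)
  interpret prob_space M by fact
  assume "x \<noteq> z"
  obtain U V where UV: "open U" "open V" "x \<in> U" "z \<in> V" "U \<inter> V = {}"
    using hausdorff[OF \<open>x \<noteq> z\<close>] by blast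
  have "prob (U \<union> V) = prob U + prob V"
    using UV sets_M by (intro finite_measure_Union) auto
  also have "\<dots> = 2"
    using x z UV by simp
  finally show False
    using prob_le_1[of "U \<union> V"] by simp
qed

lemma (in prob_space) AE_eq_imp_eq_return:
  assumes "AE x in M. x = y"
  shows "M = return M y"
proof (rule measure_eqI)
  fix A assume A: "A \<in> sets M"
  define A' where "A' = (if y \<in> A then space M else {})"
  have "AE x in M. x \<in> A \<longleftrightarrow> x \<in> A'"
    using assms AE_space by eventually_elim (auto simp: A'_def)
  then have "emeasure M A = emeasure M A'"
    using A by (intro emeasure_eq_AE) (auto simp: A'_def)
  then show "emeasure M A = emeasure (return M y) A"
    using A sets.sets_into_space[OF A] by (auto simp: A'_def emeasure_space_1)
qed simp

lemma zero_one_imp_point_mass: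
  fixes M :: "'a::{second_countable_topology, t2_space} measure"
  assumes "prob_space M" and sets_M: "sets M = sets borel"
    and zero_one: "\<forall>B\<in>sets M. measure M B = 0 \<or> measure M B = 1"
  shows "point_mass M"
proof -
  interpret prob_space M by fact
  let ?full = "\<lambda>x. \<forall>U. open U \<longrightarrow> x \<in> U \<longrightarrow> prob U = 1"
  have AE_full: "AE x in M. ?full x"
    using AE_full_measure_nbhds[OF assms] .
  obtain y where "y \<in> space M" "?full y"
  proof (rule ccontr)
    assume no_full: "\<not> thesis"
    have "AE x in M. False"
      using AE_full AE_space by eventually_elim (use that no_full in blast)
    then show False
      using AE_False by simp
  qed
  have "AE x in M. x = y"
    using AE_full by eventually_elim (use full_measure_nbhds_unique[OF \<open>prob_space M\<close> sets_M] \<open>?full y\<close> in blast)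
  then have "M = return M y"
    by (rule AE_eq_imp_eq_return)
  with \<open>y \<in> space M\<close> show ?thesis
    by (auto simp: point_mass_def)
qed

lemma mp_action_inv_cancel:
  assumes "group G" "mp_action G M b" "h \<in> carrier G" "y \<in> space M"
  shows "b (inv\<^bsub>G\<^esub> h) (b h y) = y"
proof -
  have "b (inv\<^bsub>G\<^esub> h) (b h y) = b (inv\<^bsub>G\<^esub> h \<otimes>\<^bsub>G\<^esub> h) y"
    using assms by (simp add: mp_action_def group.inv_closed)
  also have "\<dots> = y"
    using assms by (simp add: mp_action_def group.l_inv)
  finally show ?thesis .
qed

lemma subgroup_stabilizer:
  assumes G: "group G" and act: "mp_action G M b" and y: "y \<in> space M"
  shows "subgroup (stabilizer G b y) G"
proof (rule group.subgroupI[OF G])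
  show "stabilizer G b y \<noteq> {}"
    using act y group.is_monoid[OF G] by (auto simp: stabilizer_def mp_action_def)
next
  fix h assume "h \<in> stabilizer G b y"
  then have h: "h \<in> carrier G" "b h y = y"
    by (auto simp: stabilizer_def)
  then have "b (inv\<^bsub>G\<^esub> h) y = y"
    using mp_action_inv_cancel[OF G act h(1) y] by simp
  then show "inv\<^bsub>G\<^esub> h \<in> stabilizer G b y"
    using G h by (simp add: stabilizer_def group.inv_closed)
next
  fix g h assume "g \<in> stabilizer G b y" "h \<in> stabilizer G b y"
  then show "g \<otimes>\<^bsub>G\<^esub> h \<in> stabilizer G b y"
    using act y G by (auto simp: stabilizer_def mp_action_def group.is_monoid monoid.m_closed)
qed (auto simp: stabilizer_def)

lemma generate_subset_stabilizer_iff: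
  assumes "group G" "mp_action G M b" "y \<in> space M" "C \<subseteq> carrier G"
  shows "generate G C \<subseteq> stabilizer G b y \<longleftrightarrow> C \<subseteq> stabilizer G b y"
  using group.generate_subgroup_incl[OF assms(1) _ subgroup_stabilizer[OF assms(1-3)]]
    generate.incl[of _ C G] by blast

lemma sets_common_fixed_points:
  fixes M :: "'y::{metric_space, second_countable_topology} measure"
  assumes sets_M: "sets M = sets borel" and act: "mp_action G M b"
    and C: "C \<subseteq> carrier G" "countable C"
  shows "{y \<in> space M. C \<subseteq> stabilizer G b y} \<in> sets M"
proof -
  have fixed: "{y \<in> space M. b g y = y} \<in> sets M" if "g \<in> carrier G" for g
  proof -
    have "b g \<in> borel_measurable M"
      using act that measurable_cong_sets[OF refl sets_M] by (auto simp: mp_action_def)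
    then have "(\<lambda>y. dist (b g y) y) \<in> borel_measurable M"
      by (intro borel_measurable_dist) (auto simp: measurable_ident_sets[OF sets_M])
    then have "{y \<in> space M. dist (b g y) y = (\<lambda>_. 0::real) y} \<in> sets M"
      by (intro borel_measurable_eq) auto
    then show ?thesis
      by simp
  qed
  have "{y \<in> space M. C \<subseteq> stabilizer G b y} = {y \<in> space M. \<forall>g\<in>C. b g y = y}"
    using C by (auto simp: stabilizer_def)
  also have "\<dots> \<in> sets M"
    using fixed C by (intro sets.sets_Collect_countable_All') auto
  finally show ?thesis .
qed

lemma common_fixed_points_inter_invariant:
  assumes G: "group G" and act: "mp_action G M b" and H: "subgroup H G" and h: "h \<in> H"
  defines "A \<equiv> {y \<in> space M. H \<subseteq> stabilizer G b y}"
  shows "b h -` (B \<inter> A) \<inter> space M = B \<inter> A"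
proof -
  have A_space: "A \<subseteq> space M"
    by (auto simp: A_def)
  have fixed: "b h y = y" if "y \<in> A" for y
    using that h by (auto simp: A_def stabilizer_def)
  have fixed_if_moved_into_A: "b h y = y" if y: "y \<in> space M" and hy: "b h y \<in> A" for y
  proof -
    have "inv\<^bsub>G\<^esub> h \<in> H"
      using H h by (rule subgroup.m_inv_closed)
    with hy have "b (inv\<^bsub>G\<^esub> h) (b h y) = b h y"
      by (auto simp: A_def stabilizer_def)
    then show "b h y = y"
      using mp_action_inv_cancel[OF G act _ y] subgroup.subset[OF H] h by auto
  qed
  show ?thesis
    using A_space fixed fixed_if_moved_into_A by (auto; metis)
qed

lemma zero_one_if_ergodic_common_fixed_points:
  assumes G: "group G" and "prob_space M" and act: "mp_action G M b"
    and H: "subgroup H G" and erg: "ergodic_on M b H"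
  defines "A \<equiv> {y \<in> space M. H \<subseteq> stabilizer G b y}"
  assumes A: "A \<in> sets M" "measure M A > 0"
  shows "\<forall>B\<in>sets M. measure M B = 0 \<or> measure M B = 1"
proof
  interpret prob_space M by fact
  have zero_one_in_A: "prob (B \<inter> A) = 0 \<or> prob (B \<inter> A) = 1" if "B \<in> sets M" for B
    using erg that A common_fixed_points_inter_invariant[OF G act H]
    by (simp add: ergodic_on_def A_def)
  have "prob A = 1"
    using zero_one_in_A[OF \<open>A \<in> sets M\<close>] A by auto
  then have AE_A: "AE x in M. x \<in> A"
    by (rule AE_prob_1)
  fix B assume B: "B \<in> sets M"
  have "prob B = prob (B \<inter> A)"
    using AE_A B A by (intro measure_eq_AE) auto
  with zero_one_in_A[OF B] show "prob B = 0 \<or> prob B = 1"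
    by simp
qed

lemma finite_generate_if_common_fixed_points_pos:
  fixes M :: "'y::{metric_space, second_countable_topology} measure"
  assumes G: "group G" and "countable (carrier G)"
    and "prob_space M" and sets_M: "sets M = sets borel"
    and act: "mp_action G M b" and "\<not> point_mass M" and "totally_ergodic G M b"
    and C: "C \<subseteq> carrier G" and pos: "measure M {y \<in> space M. C \<subseteq> stabilizer G b y} > 0"
  shows "finite (generate G C)"
proof (rule ccontr)
  assume "infinite (generate G C)"
  let ?H = "generate G C"
  have H: "subgroup ?H G"
    using group.generate_is_subgroup[OF G C] .
  have fixed_eq: "{y \<in> space M. ?H \<subseteq> stabilizer G b y} = {y \<in> space M. C \<subseteq> stabilizer G b y}"
    using generate_subset_stabilizer_iff[OF G act _ C] by blast
  have "{y \<in> space M. C \<subseteq> stabilizer G b y} \<in> sets M"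
    using sets_common_fixed_points[OF sets_M act C] countable_subset[OF C] \<open>countable (carrier G)\<close> by blast
  moreover have "ergodic_on M b ?H"
    using \<open>totally_ergodic G M b\<close> H \<open>infinite ?H\<close> by (simp add: totally_ergodic_def)
  ultimately have "\<forall>B\<in>sets M. measure M B = 0 \<or> measure M B = 1"
    using zero_one_if_ergodic_common_fixed_points[OF G \<open>prob_space M\<close> act H] pos fixed_eq by simp
  then have "point_mass M"
    using zero_one_imp_point_mass[OF \<open>prob_space M\<close> sets_M] by blast
  with \<open>\<not> point_mass M\<close> show False ..
qed

lemma AE_stabilizer_locally_finite:
  fixes M :: "'y::{metric_space, second_countable_topology} measure"
  assumes G: "group G" and countable_G: "countable (carrier G)"
    and "prob_space M" and sets_M: "sets M = sets borel"
    and act: "mp_action G M b" and "\<not> point_mass M" and "totally_ergodic G M b"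
  shows "AE y in M. locally_finite G (stabilizer G b y)"
proof -
  interpret prob_space M by fact
  let ?Fs = "{F. finite F \<and> F \<subseteq> carrier G}"
  have "AE y in M. \<forall>F\<in>?Fs. F \<subseteq> stabilizer G b y \<longrightarrow> finite (generate G F)"
  proof (rule AE_ball_countable')
    fix F assume "F \<in> ?Fs"
    then have F: "F \<subseteq> carrier G" "countable F"
      by (auto intro: countable_finite)
    let ?A = "{y \<in> space M. F \<subseteq> stabilizer G b y}"
    show "AE y in M. F \<subseteq> stabilizer G b y \<longrightarrow> finite (generate G F)"
    proof (cases "finite (generate G F)")
      case False
      then have "\<not> measure M ?A > 0"
        using finite_generate_if_common_fixed_points_pos[OF assms F(1)] by blast
      then have "?A \<in> null_sets M"
        using sets_common_fixed_points[OF sets_M act F] measure_nonneg[of M ?A]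
        by (simp add: null_sets_def emeasure_eq_measure)
      then show ?thesis
        by (rule AE_I') auto
    qed simp
  qed (use countable_Collect_finite_subset[OF countable_G] in simp)
  then show ?thesis
    by eventually_elim (auto simp: locally_finite_def stabilizer_def)
qed

theorem lemma3p1:
  fixes G :: "('g, 'c) monoid_scheme"
    and M :: "'y::polish_space measure"
    and b :: "'g \<Rightarrow> 'y \<Rightarrow> 'y"
  assumes "group G"
    and "countable (carrier G)" and "infinite (carrier G)"
    and "prob_space M" and "sets M = sets borel"
    and "mp_action G M b"
    and "\<not> point_mass M"
    and "totally_ergodic G M b"
  shows "(\<forall>C. C \<subseteq> carrier G \<and> measure M {y \<in> space M. C \<subseteq> stabilizer G b y} > 0
              \<longrightarrow> finite (generate G C))
       \<and> (AE y in M. locally_finite G (stabilizer G b y))"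
  using finite_generate_if_common_fixed_points_pos[OF assms(1,2,4-8)]
    AE_stabilizer_locally_finite[OF assms(1,2,4-8)] by blast

end
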